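(* Let $\Omega$ be a verification operator for $|\Psi\rangle$ with second largest eigenvalue $\beta$ and smallest eigenvalue $\tau$, and let $0<\epsilon<1$, $0<\delta\le1/2$. Then $F(1,\delta,\Omega)\ge1-\epsilon$ (i.e. $\Omega$ verifies the target state within infidelity $\epsilon$ and significance level $\delta$ using a single test) iff $$0<\beta<\delta\quad\text{and}\quad\frac{\tau(\delta-\beta)}{1+\tau-2\beta}\ge\delta(1-\epsilon).$$
   Context: Let $\mathcal H$ be a Hilbert space of finite dimension $D\ge2$ and $|\Psi\rangle\in\mathcal H$ a unit vector. A verification operator for $|\Psi\rangle$ is a Hermitian operator $\Omega$ on $\mathcal H$ with $0\le\Omega\le1$, $\Omega|\Psi\rangle=|\Psi\rangle$, whose eigenvalue $1$ is nondegenerate. For a density operator $\rho$ on $\mathcal H^{\otimes2}$ put $p_\rho=\mathrm{tr}[(\Omega\otimes1)\rho]$, $f_\rho=\mathrm{tr}[(\Omega\otimes|\Psi\rangle\langle\Psi|)\rho]$, and $F(1,\delta,\Omega)=\min\{f_\rho/p_\rho:p_\rho\ge\delta\}$, the minimum over permutation-invariant density operators on $\mathcal H^{\otimes2}$. *)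

theory Defs
  imports "HOL-Analysis.Analysis"
begin

text \<open>Operators on a D-dimensional Hilbert space are complex matrices indexed by a
finite type 'n (D = CARD('n)); operators on the two-fold tensor product are matrices
indexed by 'n \<times> 'n.\<close>

definition hermitian :: "complex^'n^'n \<Rightarrow> bool" where
  "hermitian A \<longleftrightarrow> (\<forall>i j. A$i$j = cnj (A$j$i))"

definition qform :: "complex^'n^'n \<Rightarrow> complex^'n \<Rightarrow> complex" where
  "qform A v = (\<Sum>i\<in>UNIV. \<Sum>j\<in>UNIV. cnj (v$i) * A$i$j * v$j)"

definition psd :: "complex^'n^'n \<Rightarrow> bool" where
  "psd A \<longleftrightarrow> hermitian A \<and> (\<forall>v. 0 \<le> Re (qform A v))"

definition verification_operator :: "complex^'n^'n \<Rightarrow> complex^'n \<Rightarrow> bool" where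
  "verification_operator Om Psi \<longleftrightarrow>
     hermitian Om \<and> psd Om \<and> psd (mat 1 - Om) \<and> Om *v Psi = Psi \<and>
     (\<forall>v. Om *v v = v \<longrightarrow> (\<exists>c. v = c *s Psi))"

definition real_eigenvalue :: "complex^'n^'n \<Rightarrow> real \<Rightarrow> bool" where
  "real_eigenvalue A l \<longleftrightarrow> (\<exists>v. v \<noteq> 0 \<and> A *v v = complex_of_real l *s v)"

definition tensor_op :: "complex^'n^'n \<Rightarrow> complex^'m^'m \<Rightarrow> complex^('n\<times>'m)^('n\<times>'m)" where
  "tensor_op A B = (\<chi> x y. A$(fst x)$(fst y) * B$(snd x)$(snd y))"

definition proj :: "complex^'n \<Rightarrow> complex^'n^'n" where
  "proj Psi = (\<chi> i j. Psi$i * cnj (Psi$j))"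

definition density :: "complex^'n^'n \<Rightarrow> bool" where
  "density rho \<longleftrightarrow> psd rho \<and> trace rho = 1"

text \<open>Permutation invariance: SWAP rho SWAP = rho, written out entrywise.\<close>
definition perm_invariant :: "complex^('n::finite\<times>'n)^('n\<times>'n) \<Rightarrow> bool" where
  "perm_invariant rho \<longleftrightarrow> (\<forall>a b. rho$a$b = rho$(prod.swap a)$(prod.swap b))"

definition p_val :: "complex^'n^'n \<Rightarrow> complex^('n::finite\<times>'n)^('n\<times>'n) \<Rightarrow> real" where
  "p_val Om rho = Re (trace (tensor_op Om (mat 1) ** rho))"

definition f_val :: "complex^'n^'n \<Rightarrow> complex^'n \<Rightarrow> complex^('n::finite\<times>'n)^('n\<times>'n) \<Rightarrow> real" where
  "f_val Om Psi rho = Re (trace (tensor_op Om (proj Psi) ** rho))"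

text \<open>F(1,\<delta>,\<Omega>): the minimum (attained infimum) of f/p over permutation-invariant
density operators with p \<ge> \<delta>.\<close>
definition F1 :: "real \<Rightarrow> complex^'n^'n \<Rightarrow> complex^'n \<Rightarrow> real" where
  "F1 delta Om Psi = Inf {f_val Om Psi rho / p_val Om rho | rho.
       density rho \<and> perm_invariant rho \<and> delta \<le> p_val Om rho}"

end

theory Submission
  imports Defs
begin

text \<open>Diagonalise \<open>\<Omega> = \<Sum>\<^sub>q \<lambda>\<^sub>q |e\<^sub>q\<rangle>\<langle>e\<^sub>q|\<close> with \<open>e\<^sub>i\<^sub>0\<close> a phase multiple of \<open>\<Psi>\<close>. For a
  two-copy state \<open>\<rho>\<close> the weights \<open>r\<^sub>q\<^sub>l = \<langle>e\<^sub>q \<otimes> e\<^sub>l|\<rho>|e\<^sub>q \<otimes> e\<^sub>l\<rangle>\<close> are nonnegative, sum to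
  \<open>1\<close>, and are symmetric in \<open>q, l\<close> when \<open>\<rho>\<close> is permutation invariant; in terms of them
  \<open>p = \<Sum>\<^sub>q\<^sub>l \<lambda>\<^sub>q r\<^sub>q\<^sub>l\<close> and \<open>f = \<Sum>\<^sub>q \<lambda>\<^sub>q r\<^sub>q\<^sub>i\<^sub>0\<close>. As all other eigenvalues lie in \<open>[\<tau>, \<beta>]\<close>,
  comparing symmetrised coefficients term by term gives \<open>\<tau> (p - \<beta>) \<le> (1 + \<tau> - 2\<beta>) f\<close>, hence
  \<open>f/p \<ge> \<tau> (\<delta> - \<beta>) / ((1 + \<tau> - 2\<beta>) \<delta>)\<close> whenever \<open>p \<ge> \<delta> > \<beta>\<close>. A mixture of \<open>v \<otimes> v\<close> and
  \<open>(\<Psi> \<otimes> u + u \<otimes> \<Psi>)/\<surd>2\<close>, with \<open>v, u\<close> eigenvectors for \<open>\<beta>, \<tau>\<close>, attains this value at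
  \<open>p = \<delta>\<close>; if \<open>\<delta> \<le> \<beta>\<close>, the state \<open>v \<otimes> v\<close> alone passes with probability \<open>\<beta>\<close> but has
  \<open>f = 0\<close>.\<close>

section \<open>Complex inner product and positive matrices\<close>

definition cinner :: "complex^'n \<Rightarrow> complex^'n \<Rightarrow> complex" where
  "cinner x y = (\<Sum>i\<in>UNIV. cnj (x$i) * y$i)"

lemma cinner_add_left: "cinner (x + y) z = cinner x z + cinner y z"
  by (simp add: cinner_def distrib_right sum.distrib)

lemma cinner_add_right: "cinner x (y + z) = cinner x y + cinner x z"
  by (simp add: cinner_def distrib_left sum.distrib)

lemma cinner_diff_left: "cinner (x - y) z = cinner x z - cinner y z"
  by (simp add: cinner_def left_diff_distrib sum_subtractf)

lemma cinner_diff_right: "cinner x (y - z) = cinner x y - cinner x z"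
  by (simp add: cinner_def right_diff_distrib sum_subtractf)

lemma cinner_smult_left: "cinner (c *s x) y = cnj c * cinner x y"
  by (simp add: cinner_def sum_distrib_left mult_ac)

lemma cinner_smult_right: "cinner x (c *s y) = c * cinner x y"
  by (simp add: cinner_def sum_distrib_left mult_ac)

lemma cinner_zero_right [simp]: "cinner x 0 = 0"
  by (simp add: cinner_def)

lemma cinner_sum_right: "cinner x (\<Sum>i\<in>I. f i) = (\<Sum>i\<in>I. cinner x (f i))"
  by (induction I rule: infinite_finite_induct) (auto simp: cinner_add_right)

lemma cinner_commute: "cinner y x = cnj (cinner x y)"
  by (simp add: cinner_def mult.commute)

lemma cinner_self: "cinner x x = of_real ((norm x)\<^sup>2)"
proof -
  have "cinner x x = of_real (\<Sum>i\<in>UNIV. (norm (x$i))\<^sup>2)"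
    unfolding cinner_def of_real_sum by (intro sum.cong refl) (metis complex_norm_square mult.commute)
  also have "(\<Sum>i\<in>UNIV. (norm (x$i))\<^sup>2) = (norm x)\<^sup>2"
    by (simp add: norm_vec_def L2_set_def sum_nonneg)
  finally show ?thesis .
qed

lemma inner_eq_Re_cinner: "(x::complex^'n) \<bullet> y = Re (cinner x y)"
  by (simp add: inner_vec_def cinner_def inner_complex_def Re_sum)

lemma scaleR_eq_smult: "r *\<^sub>R (x::complex^'n) = of_real r *s x"
  by (simp add: vec_eq_iff) (simp add: scaleR_conv_of_real)

lemma qform_eq_cinner: "qform A x = cinner x (A *v x)"
  by (simp add: qform_def cinner_def matrix_vector_mult_def sum_distrib_left mult_ac)

lemma hermitian_cinner_adjoint:
  assumes "hermitian A"
  shows "cinner x (A *v y) = cinner (A *v x) y"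
proof -
  have "cinner x (A *v y) = (\<Sum>i\<in>UNIV. \<Sum>j\<in>UNIV. cnj (x$i) * A$i$j * y$j)"
    by (simp add: cinner_def matrix_vector_mult_def sum_distrib_left mult_ac)
  also have "\<dots> = (\<Sum>j\<in>UNIV. \<Sum>i\<in>UNIV. cnj (x$i) * A$i$j * y$j)"
    by (rule sum.swap)
  also have "\<dots> = (\<Sum>j\<in>UNIV. \<Sum>i\<in>UNIV. cnj (A$j$i * x$i) * y$j)"
    using assms unfolding hermitian_def
    by (intro sum.cong refl) (metis complex_cnj_cnj complex_cnj_mult mult.commute)
  also have "\<dots> = cinner (A *v x) y"
    by (simp add: cinner_def matrix_vector_mult_def sum_distrib_right cnj_sum)
  finally show ?thesis .
qed

lemma hermitian_eigenvectors_orthogonal: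
  assumes "hermitian A" "A *v x = of_real l *s x" "A *v y = of_real m *s y" "l \<noteq> m"
  shows "cinner x y = 0"
proof -
  have "of_real m * cinner x y = cinner x (A *v y)"
    by (simp add: assms(3) cinner_smult_right)
  also have "\<dots> = of_real l * cinner x y"
    by (simp add: hermitian_cinner_adjoint[OF assms(1)] assms(2) cinner_smult_left)
  finally show ?thesis
    using assms(4) by simp
qed

lemma real_eigenvalue_unit_eigenvector:
  assumes "real_eigenvalue A l"
  obtains v where "norm v = 1" "A *v v = of_real l *s v"
proof -
  obtain v where v: "v \<noteq> 0" "A *v v = of_real l *s v"
    using assms unfolding real_eigenvalue_def by blast
  show ?thesis
  proof
    show "norm ((1 / norm v) *\<^sub>R v) = 1"
      using v(1) by simp
    show "A *v ((1 / norm v) *\<^sub>R v) = of_real l *s ((1 / norm v) *\<^sub>R v)"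
      by (simp add: scaleR_eq_smult vector_scalar_commute v(2) vector_smult_assoc mult.commute)
  qed
qed

lemma psd_real_eigenvalue_nonneg:
  assumes "psd A" "real_eigenvalue A l"
  shows "0 \<le> l"
proof -
  obtain v where v: "v \<noteq> 0" "A *v v = of_real l *s v"
    using assms(2) unfolding real_eigenvalue_def by blast
  have "0 \<le> Re (qform A v)"
    using assms(1) unfolding psd_def by blast
  also have "Re (qform A v) = l * (norm v)\<^sup>2"
    by (simp add: qform_eq_cinner v(2) cinner_smult_right cinner_self)
  finally show ?thesis
    using v(1) by (simp add: zero_le_mult_iff)
qed

lemma hermitian_add: "hermitian A \<Longrightarrow> hermitian B \<Longrightarrow> hermitian (A + B)"
  unfolding hermitian_def by (metis complex_cnj_add vector_add_component)

lemma hermitian_scaleR: "hermitian A \<Longrightarrow> hermitian (r *\<^sub>R A)"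
  unfolding hermitian_def by (metis complex_cnj_scaleR vector_scaleR_component)

lemma qform_add: "qform (A + B) v = qform A v + qform B v"
  by (simp add: qform_def distrib_left distrib_right sum.distrib)

lemma qform_scaleR: "qform (r *\<^sub>R A) v = of_real r * qform A v"
  by (simp add: qform_def sum_distrib_left) (simp add: scaleR_conv_of_real mult_ac)

lemma psd_add: "psd A \<Longrightarrow> psd B \<Longrightarrow> psd (A + B)"
  by (simp add: psd_def hermitian_add qform_add)

lemma psd_scaleR: "0 \<le> r \<Longrightarrow> psd A \<Longrightarrow> psd (r *\<^sub>R A)"
  by (simp add: psd_def hermitian_scaleR qform_scaleR)

lemma proj_mult_vec: "proj w *v x = cinner w x *s w"
  by (simp add: vec_eq_iff proj_def matrix_vector_mult_def cinner_def sum_distrib_left mult_ac)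

lemma psd_proj: "psd (proj w)"
proof -
  have "qform (proj w) v = cnj (cinner w v) * cinner w v" for v
    by (simp add: qform_eq_cinner proj_mult_vec cinner_smult_right cinner_commute[of v w])
  then show ?thesis
    by (simp add: psd_def hermitian_def proj_def)
qed

lemma proj_eq_if_unit_multiple:
  assumes "x = c *s y" "norm x = 1" "norm y = 1"
  shows "proj x = proj y"
proof -
  have "cinner x x = 1" "cinner y y = 1"
    using assms(2,3) by (simp_all add: cinner_self)
  then have "c * cnj c = 1"
    unfolding assms(1) cinner_smult_left cinner_smult_right by (simp add: mult.commute)
  then show ?thesis
    by (simp add: assms(1) proj_def vec_eq_iff)
qed

section \<open>Spectral theorem for Hermitian matrices\<close>

definition csubspace :: "(complex^'n) set \<Rightarrow> bool" where
  "csubspace W \<longleftrightarrow> 0 \<in> W \<and> (\<forall>x\<in>W. \<forall>y\<in>W. x + y \<in> W) \<and> (\<forall>c. \<forall>x\<in>W. c *s x \<in> W)"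

lemma csubspace_imp_subspace: "csubspace W \<Longrightarrow> subspace W"
  unfolding csubspace_def subspace_def by (simp add: scaleR_eq_smult)

lemma csubspace_smult: "csubspace W \<Longrightarrow> x \<in> W \<Longrightarrow> c *s x \<in> W"
  by (simp add: csubspace_def)

lemma csubspace_diff: "csubspace W \<Longrightarrow> x \<in> W \<Longrightarrow> y \<in> W \<Longrightarrow> x - y \<in> W"
  by (simp add: csubspace_imp_subspace subspace_diff)

lemma linear_coeff_zero_if_quadratic_dominates:
  fixes a b :: real
  assumes "\<And>t. 2 * t * a \<le> t\<^sup>2 * b"
  shows "a = 0"
proof (rule ccontr)
  assume "a \<noteq> 0"
  define t where "t = a / (\<bar>b\<bar> + 1)"
  have ta: "t * a > 0"
    using \<open>a \<noteq> 0\<close> by (simp add: t_def power2_eq_square[symmetric] add_pos_nonneg)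
  have "t\<^sup>2 * b \<le> t\<^sup>2 * \<bar>b\<bar>"
    by (simp add: mult_left_mono)
  also have "\<dots> = (t * a) * (\<bar>b\<bar> / (\<bar>b\<bar> + 1))"
    by (simp add: t_def power2_eq_square field_simps)
  also have "\<dots> < t * a"
    using ta mult_strict_left_mono[of "\<bar>b\<bar> / (\<bar>b\<bar> + 1)" 1 "t * a"] by simp
  finally show False
    using assms[of t] ta by linarith
qed

text \<open>The form \<open>Q z = m \<parallel>z\<parallel>\<^sup>2 - Re \<langle>z, A z\<rangle>\<close> is nonnegative on \<open>W\<close> and vanishes at \<open>x\<close>, so
  expanding \<open>Q (x - t g)\<close> for \<open>g = m x - A x\<close> forces \<open>g = 0\<close>.\<close>
lemma hermitian_rayleigh_maximiser_eigenvector: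
  assumes herm: "hermitian A" and W: "csubspace W" and AW: "\<And>z. z \<in> W \<Longrightarrow> A *v z \<in> W"
    and bound: "\<And>z. z \<in> W \<Longrightarrow> Re (cinner z (A *v z)) \<le> m * (norm z)\<^sup>2"
    and x: "x \<in> W" "Re (cinner x (A *v x)) = m * (norm x)\<^sup>2"
  shows "A *v x = of_real m *s x"
proof -
  define M where "M z = of_real m *s z - A *v z" for z
  have M_adjoint: "cinner y (M z) = cinner (M y) z" for y z
    by (simp add: M_def cinner_diff_left cinner_diff_right cinner_smult_left cinner_smult_right
        hermitian_cinner_adjoint[OF herm])
  have M_diff: "M (y - c *s z) = M y - c *s M z" for y z c
    by (simp add: M_def matrix_vector_mult_diff_distrib vector_scalar_commute vec_eq_iff algebra_simps)
  have Q_nonneg: "0 \<le> Re (cinner z (M z))" if "z \<in> W" for z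
    using bound[OF that] by (simp add: M_def cinner_diff_right cinner_smult_right cinner_self)
  define g where "g = M x"
  have gW: "g \<in> W"
    unfolding g_def M_def by (intro csubspace_diff[OF W] csubspace_smult[OF W] AW x(1))
  have "2 * t * (norm g)\<^sup>2 \<le> t\<^sup>2 * Re (cinner g (M g))" for t
  proof -
    have "0 \<le> Re (cinner (x - of_real t *s g) (M (x - of_real t *s g)))"
      using Q_nonneg csubspace_diff[OF W x(1) csubspace_smult[OF W gW]] by blast
    also have "\<dots> = Re (cinner x (M x)) - 2 * t * (norm g)\<^sup>2 + t\<^sup>2 * Re (cinner g (M g))"
      unfolding M_diff
      by (simp add: cinner_diff_left cinner_diff_right cinner_smult_left cinner_smult_right
          M_adjoint[of x g] g_def[symmetric] cinner_self power2_eq_square algebra_simps)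
    also have "Re (cinner x (M x)) = 0"
      using x(2) by (simp add: M_def cinner_diff_right cinner_smult_right cinner_self)
    finally show ?thesis by simp
  qed
  then have "(norm g)\<^sup>2 = 0"
    by (rule linear_coeff_zero_if_quadratic_dominates)
  then show ?thesis
    by (simp add: g_def M_def)
qed

lemma hermitian_eigenvector_in_invariant_subspace:
  assumes herm: "hermitian A" and W: "csubspace W" and AW: "\<And>z. z \<in> W \<Longrightarrow> A *v z \<in> W"
    and y: "y \<in> W" "y \<noteq> 0"
  obtains x m where "x \<in> W" "norm x = 1" "A *v x = of_real m *s x"
proof -
  define f where "f z = Re (cinner z (A *v z))" for z
  have Wsub: "subspace W"
    using W by (rule csubspace_imp_subspace)
  let ?S = "W \<inter> sphere 0 1"
  have "compact ?S"
    by (intro closed_Int_compact closed_subspace Wsub compact_sphere)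
  moreover have "(1 / norm y) *\<^sub>R y \<in> ?S"
    using y by (simp add: subspace_scale[OF Wsub])
  moreover have "continuous_on ?S f"
    unfolding f_def cinner_def matrix_vector_mult_def by (intro continuous_intros)
  ultimately obtain x where x: "x \<in> ?S" and xmax: "\<And>z. z \<in> ?S \<Longrightarrow> f z \<le> f x"
    using continuous_attains_sup[of ?S f] by blast
  have "f z \<le> f x * (norm z)\<^sup>2" if "z \<in> W" for z
  proof (cases "z = 0")
    case False
    have "(1 / norm z) *\<^sub>R z \<in> ?S"
      using that False by (simp add: subspace_scale[OF Wsub])
    then have "f ((1 / norm z) *\<^sub>R z) \<le> f x" by (rule xmax)
    moreover have "f ((1 / norm z) *\<^sub>R z) = f z / (norm z)\<^sup>2"
      unfolding f_def scaleR_eq_smult vector_scalar_commute cinner_smult_left cinner_smult_right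
      by (simp add: power2_eq_square)
    ultimately show ?thesis
      using False by (simp add: divide_le_eq)
  qed (simp add: f_def)
  then have "A *v x = of_real (f x) *s x"
    using x by (intro hermitian_rayleigh_maximiser_eigenvector[OF herm W AW]) (auto simp: f_def)
  with x show ?thesis
    using that by auto
qed

definition orthonormal_family :: "nat \<Rightarrow> (nat \<Rightarrow> complex^'n) \<Rightarrow> bool" where
  "orthonormal_family k e \<longleftrightarrow> (\<forall>i<k. \<forall>j<k. cinner (e i) (e j) = (if i = j then 1 else 0))"

definition orthonormal_eigenvectors ::
    "complex^'n^'n \<Rightarrow> nat \<Rightarrow> (nat \<Rightarrow> complex^'n) \<Rightarrow> (nat \<Rightarrow> real) \<Rightarrow> bool" where
  "orthonormal_eigenvectors A k e lam \<longleftrightarrow>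
     orthonormal_family k e \<and> (\<forall>i<k. A *v e i = of_real (lam i) *s e i)"

definition orthonormal_eigenbasis ::
    "complex^'n^'n \<Rightarrow> nat \<Rightarrow> (nat \<Rightarrow> complex^'n) \<Rightarrow> (nat \<Rightarrow> real) \<Rightarrow> bool" where
  "orthonormal_eigenbasis A k e lam \<longleftrightarrow>
     orthonormal_eigenvectors A k e lam \<and> (\<forall>x. x = (\<Sum>i<k. cinner (e i) x *s e i))"

text \<open>Over the reals the vectors \<open>e i\<close> and \<open>\<i> e i\<close> together are orthonormal, so they are
  \<open>2 k\<close> independent vectors in the real space \<open>complex^'n\<close> of dimension \<open>2 CARD('n)\<close>.\<close>
lemma orthonormal_family_card_le:
  fixes e :: "nat \<Rightarrow> complex^'n"
  assumes "orthonormal_family k e"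
  shows "k \<le> CARD('n)"
proof -
  define I where "I = {..<k} \<times> {1, \<i>}"
  define E where "E p = snd p *s e (fst p)" for p
  have inner_E: "E p \<bullet> E q = (if p = q then 1 else 0)" if "p \<in> I" "q \<in> I" for p q
  proof -
    have "E p \<bullet> E q = Re (cnj (snd p) * snd q) * (if fst p = fst q then 1 else 0)"
      using that assms
      by (auto simp: I_def E_def orthonormal_family_def inner_eq_Re_cinner cinner_smult_left
          cinner_smult_right)
    moreover have "Re (cnj (snd p) * snd q) = (if snd p = snd q then 1 else 0)"
      using that by (auto simp: I_def)
    ultimately show ?thesis
      by (simp add: prod_eq_iff)
  qed
  have inj: "inj_on E I"
    by (rule inj_onI) (metis inner_E one_neq_zero)
  have "pairwise orthogonal (E ` I)"
    unfolding pairwise_def orthogonal_def using inner_E by fastforce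
  moreover have "0 \<notin> E ` I"
    using inner_E by fastforce
  ultimately have "independent (E ` I)"
    by (rule pairwise_orthogonal_independent)
  then have "card (E ` I) \<le> DIM(complex^'n)"
    using independent_bound by blast
  moreover have "card (E ` I) = 2 * k"
    using inj by (simp add: card_image I_def card_cartesian_product)
  ultimately show ?thesis by simp
qed

lemma cinner_orthonormal_residual:
  assumes "orthonormal_family k e" "j < k"
  shows "cinner (e j) (x - (\<Sum>i<k. cinner (e i) x *s e i)) = 0"
proof -
  have "cinner (e j) (\<Sum>i<k. cinner (e i) x *s e i) = (\<Sum>i<k. cinner (e i) x * (if j = i then 1 else 0))"
    using assms unfolding orthonormal_family_def by (simp add: cinner_sum_right cinner_smult_right)
  also have "\<dots> = cinner (e j) x"
    using assms(2) by (simp add: if_distrib[of "times _"] cong: if_cong)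
  finally show ?thesis
    by (simp add: cinner_diff_right)
qed

lemma orthonormal_eigenvectors_extend:
  assumes herm: "hermitian A" and ev: "orthonormal_eigenvectors A k e lam"
    and incomplete: "x \<noteq> (\<Sum>i<k. cinner (e i) x *s e i)"
  shows "\<exists>e' lam'. orthonormal_eigenvectors A (Suc k) e' lam'"
proof -
  have on: "orthonormal_family k e" and eig: "\<And>i. i < k \<Longrightarrow> A *v e i = of_real (lam i) *s e i"
    using ev unfolding orthonormal_eigenvectors_def by auto
  define W where "W = {z. \<forall>i<k. cinner (e i) z = 0}"
  have W: "csubspace W"
    by (simp add: W_def csubspace_def cinner_add_right cinner_smult_right)
  have AW: "A *v z \<in> W" if "z \<in> W" for z
    using that by (simp add: W_def hermitian_cinner_adjoint[OF herm] eig cinner_smult_left)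
  have "x - (\<Sum>i<k. cinner (e i) x *s e i) \<in> W"
    using cinner_orthonormal_residual[OF on] by (simp add: W_def)
  moreover have "x - (\<Sum>i<k. cinner (e i) x *s e i) \<noteq> 0"
    using incomplete by simp
  ultimately obtain y m where y: "y \<in> W" "norm y = 1" "A *v y = of_real m *s y"
    using hermitian_eigenvector_in_invariant_subspace[OF herm W AW] by blast
  have "cinner y (e i) = 0" if "i < k" for i
    using y(1) that cinner_commute[of y "e i"] by (simp add: W_def)
  then have "orthonormal_family (Suc k) (e(k := y))"
    using on y(1,2) by (auto simp: orthonormal_family_def less_Suc_eq W_def cinner_self)
  moreover have "\<forall>i<Suc k. A *v (e(k := y)) i = of_real ((lam(k := m)) i) *s (e(k := y)) i"
    using eig y(3) by (simp add: less_Suc_eq)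
  ultimately show ?thesis
    unfolding orthonormal_eigenvectors_def by blast
qed

text \<open>A family of orthonormal eigenvectors of maximal length exists by the dimension bound, and it is
  complete since otherwise it could be extended.\<close>
theorem hermitian_orthonormal_eigenbasis:
  fixes A :: "complex^'n^'n"
  assumes "hermitian A"
  shows "\<exists>k e lam. orthonormal_eigenbasis A k e lam"
proof -
  define K where "K = {k. \<exists>e lam. orthonormal_eigenvectors A k e lam}"
  have "0 \<in> K"
    by (simp add: K_def orthonormal_eigenvectors_def orthonormal_family_def)
  have "K \<subseteq> {..CARD('n)}"
    using orthonormal_family_card_le by (auto simp: K_def orthonormal_eigenvectors_def)
  then have "finite K"
    by (rule finite_subset) simp
  define k where "k = Max K"
  have "k \<in> K"
    using \<open>finite K\<close> \<open>0 \<in> K\<close> unfolding k_def by (intro Max_in) auto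
  then obtain e lam where ev: "orthonormal_eigenvectors A k e lam"
    by (auto simp: K_def)
  have "Suc k \<notin> K"
    using Max_ge[OF \<open>finite K\<close>, of "Suc k"] by (auto simp: k_def)
  then have "x = (\<Sum>i<k. cinner (e i) x *s e i)" for x
    using orthonormal_eigenvectors_extend[OF assms ev] by (auto simp: K_def)
  with ev show ?thesis
    unfolding orthonormal_eigenbasis_def by blast
qed

lemma orthonormal_family_norm:
  assumes "orthonormal_family k e" "i < k"
  shows "norm (e i) = 1"
proof -
  have "cinner (e i) (e i) = 1"
    using assms by (simp add: orthonormal_family_def)
  then have "of_real ((norm (e i))\<^sup>2) = (1::complex)"
    by (simp only: cinner_self)
  then have "(norm (e i))\<^sup>2 = 1"
    using of_real_eq_1_iff by blast
  then show ?thesis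
    using norm_ge_zero[of "e i"] by (simp add: power2_eq_1_iff)
qed

lemma orthonormal_eigenbasis_coefficient_nonzero:
  assumes "orthonormal_eigenbasis A k e lam" "x \<noteq> 0"
  obtains i where "i < k" "cinner (e i) x \<noteq> 0"
proof -
  have complete: "x = (\<Sum>i<k. cinner (e i) x *s e i)"
    using assms(1) unfolding orthonormal_eigenbasis_def by blast
  have "\<exists>i<k. cinner (e i) x \<noteq> 0"
  proof (rule ccontr)
    assume "\<not> (\<exists>i<k. cinner (e i) x \<noteq> 0)"
    then have "x = 0"
      using complete by simp
    with assms(2) show False ..
  qed
  with that show ?thesis
    by blast
qed

lemma orthonormal_eigenbasis_real_eigenvalue:
  assumes "orthonormal_eigenbasis A k e lam" "q < k"
  shows "real_eigenvalue A (lam q)"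
proof -
  have "norm (e q) = 1" "A *v e q = of_real (lam q) *s e q"
    using assms orthonormal_family_norm
    by (auto simp: orthonormal_eigenbasis_def orthonormal_eigenvectors_def)
  then show ?thesis
    unfolding real_eigenvalue_def by (metis norm_zero zero_neq_one)
qed

lemma scaleR_matrix_mult_vec: "(r *\<^sub>R (A::complex^'n^'m)) *v x = r *\<^sub>R (A *v x)"
  by (simp add: vec_eq_iff matrix_vector_mult_def scaleR_sum_right)

lemma sum_matrix_mult_vec: "(\<Sum>q\<in>Q. A q :: complex^'n^'m) *v x = (\<Sum>q\<in>Q. A q *v x)"
  by (induction Q rule: infinite_finite_induct) (auto simp: matrix_vector_mult_add_rdistrib)

lemma matrix_mult_vec_sum: "(A::complex^'n^'m) *v (\<Sum>q\<in>Q. x q) = (\<Sum>q\<in>Q. A *v x q)"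
  by (induction Q rule: infinite_finite_induct) (auto simp: matrix_vector_right_distrib)

lemma orthonormal_eigenbasis_expansion:
  assumes "orthonormal_eigenbasis A k e lam"
  shows "A = (\<Sum>q<k. lam q *\<^sub>R proj (e q))"
proof -
  have eig: "\<And>q. q < k \<Longrightarrow> A *v e q = of_real (lam q) *s e q"
    and complete: "\<And>x. x = (\<Sum>q<k. cinner (e q) x *s e q)"
    using assms unfolding orthonormal_eigenbasis_def orthonormal_eigenvectors_def by auto
  have "A *v x = (\<Sum>q<k. lam q *\<^sub>R proj (e q)) *v x" for x
  proof -
    have "A *v x = (\<Sum>q<k. cinner (e q) x *s (A *v e q))"
      by (subst complete) (simp add: matrix_mult_vec_sum vector_scalar_commute)
    also have "\<dots> = (\<Sum>q<k. lam q *\<^sub>R proj (e q) *v x)"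
      by (intro sum.cong refl)
        (simp add: eig scaleR_matrix_mult_vec proj_mult_vec scaleR_eq_smult vector_smult_assoc mult.commute)
    finally show ?thesis
      by (simp add: sum_matrix_mult_vec)
  qed
  then show ?thesis
    by (simp add: matrix_eq)
qed

lemma orthonormal_eigenbasis_mat_1:
  assumes "orthonormal_eigenbasis A k e lam"
  shows "orthonormal_eigenbasis (mat 1) k e (\<lambda>_. 1)"
  using assms by (simp add: orthonormal_eigenbasis_def orthonormal_eigenvectors_def)

lemma orthonormal_eigenbasis_proj:
  assumes "orthonormal_eigenbasis A k e lam" "i < k"
  shows "orthonormal_eigenbasis (proj (e i)) k e (\<lambda>j. if j = i then 1 else 0)"
  using assms by (auto simp: orthonormal_eigenbasis_def orthonormal_eigenvectors_def
      orthonormal_family_def proj_mult_vec)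

section \<open>Operators on two copies\<close>

definition tensor_vec :: "complex^'n \<Rightarrow> complex^'m \<Rightarrow> complex^('n \<times> 'm)" where
  "tensor_vec x y = (\<chi> a. x$(fst a) * y$(snd a))"

lemma sum_UNIV_prod:
  "(\<Sum>a\<in>(UNIV::('n::finite \<times> 'm::finite) set). f a) = (\<Sum>i\<in>UNIV. \<Sum>j\<in>UNIV. f (i, j))"
  using sum.cartesian_product[of "\<lambda>i j. f (i, j)" UNIV UNIV] by (simp add: case_prod_beta)

lemma tensor_op_mult_tensor_vec:
  "tensor_op A B *v tensor_vec x y = tensor_vec (A *v x) (B *v y)"
  by (simp add: vec_eq_iff tensor_op_def tensor_vec_def matrix_vector_mult_def sum_UNIV_prod
      sum_product mult_ac)

lemma cinner_tensor_vec: "cinner (tensor_vec x y) (tensor_vec u v) = cinner x u * cinner y v"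
  by (simp add: cinner_def tensor_vec_def sum_UNIV_prod sum_product mult_ac)

lemma tensor_op_proj: "tensor_op (proj x) (proj y) = proj (tensor_vec x y)"
  by (simp add: tensor_op_def proj_def tensor_vec_def vec_eq_iff mult_ac)

lemma tensor_op_mat_1: "tensor_op (mat 1 :: complex^'n^'n) (mat 1 :: complex^'m^'m) = mat 1"
  by (simp add: tensor_op_def mat_def vec_eq_iff prod_eq_iff)

lemma bilinear_tensor_op: "bilinear tensor_op"
  unfolding bilinear_def
  by (auto intro!: linearI simp: tensor_op_def vec_eq_iff algebra_simps)

lemma trace_add_mult: "trace ((M + N) ** rho) = trace (M ** rho) + trace (N ** rho)"
  by (simp add: trace_def matrix_matrix_mult_def distrib_right sum.distrib)

lemma trace_sum_mult: "trace ((\<Sum>p\<in>P. M p) ** rho) = (\<Sum>p\<in>P. trace (M p ** rho))"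
  by (induction P rule: infinite_finite_induct) (auto simp: trace_add_mult trace_0[unfolded mat_0])

lemma trace_scaleR: "trace (r *\<^sub>R M) = of_real r * trace M"
  by (simp add: trace_def sum_distrib_left) (simp add: scaleR_conv_of_real)

lemma trace_proj_mult: "trace (proj w ** rho) = qform rho w"
  unfolding trace_def matrix_matrix_mult_def proj_def qform_def
  by (subst sum.swap) (simp add: sum_distrib_left sum_distrib_right mult_ac)

lemma trace_mult_proj: "trace (X ** proj w) = qform X w"
  unfolding trace_def matrix_matrix_mult_def proj_def qform_def
  by (simp add: sum_distrib_left sum_distrib_right mult_ac)

lemma trace_mult_mixture:
  "trace (X ** (a *\<^sub>R proj w + b *\<^sub>R proj w')) = of_real a * qform X w + of_real b * qform X w'"
  by (simp add: matrix_add_ldistrib matrix_scalar_ac scalar_matrix_assoc[symmetric] trace_add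
      trace_scaleR trace_mult_proj)

lemma trace_tensor_op_eigenbases:
  assumes "orthonormal_eigenbasis A k e lam" "orthonormal_eigenbasis B m f mu"
  shows "trace (tensor_op A B ** rho)
    = (\<Sum>q<k. \<Sum>l<m. of_real (lam q * mu l) * qform rho (tensor_vec (e q) (f l)))"
proof -
  have "tensor_op A B = tensor_op (\<Sum>q<k. lam q *\<^sub>R proj (e q)) (\<Sum>l<m. mu l *\<^sub>R proj (f l))"
    using orthonormal_eigenbasis_expansion[OF assms(1)] orthonormal_eigenbasis_expansion[OF assms(2)]
    by simp
  also have "\<dots> = (\<Sum>(q, l)\<in>{..<k} \<times> {..<m}. tensor_op (lam q *\<^sub>R proj (e q)) (mu l *\<^sub>R proj (f l)))"
    by (rule bilinear_sum[OF bilinear_tensor_op])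
  also have "\<dots> = (\<Sum>(q, l)\<in>{..<k} \<times> {..<m}. (lam q * mu l) *\<^sub>R proj (tensor_vec (e q) (f l)))"
    by (simp add: bilinear_lmul[OF bilinear_tensor_op] bilinear_rmul[OF bilinear_tensor_op]
        tensor_op_proj case_prod_beta mult.commute)
  finally have "trace (tensor_op A B ** rho) = (\<Sum>(q, l)\<in>{..<k} \<times> {..<m}.
      of_real (lam q * mu l) * qform rho (tensor_vec (e q) (f l)))"
    by (simp add: trace_sum_mult scalar_matrix_assoc[symmetric] trace_scaleR trace_proj_mult
        case_prod_unfold)
  then show ?thesis
    by (simp add: sum.cartesian_product)
qed

lemma qform_tensor_vec_swap:
  assumes "perm_invariant rho"
  shows "qform rho (tensor_vec y x) = qform rho (tensor_vec x y)"
proof -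
  have swap: "(\<Sum>a\<in>UNIV. g (prod.swap a)) = (\<Sum>a\<in>UNIV. g a)" for g :: "'a \<times> 'a \<Rightarrow> complex"
    by (rule sum.reindex_bij_witness[of _ prod.swap prod.swap]) auto
  have "qform rho (tensor_vec y x) = (\<Sum>a\<in>UNIV. \<Sum>b\<in>UNIV.
      cnj (tensor_vec x y $ prod.swap a) * rho $ prod.swap (prod.swap a) $ prod.swap (prod.swap b)
        * tensor_vec x y $ prod.swap b)"
    by (simp add: qform_def tensor_vec_def mult.commute)
  also have "\<dots> = (\<Sum>a\<in>UNIV. \<Sum>b\<in>UNIV.
      cnj (tensor_vec x y $ a) * rho $ prod.swap a $ prod.swap b * tensor_vec x y $ b)"
    by (subst swap, subst swap) (rule refl)
  also have "\<dots> = qform rho (tensor_vec x y)"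
  proof -
    have "rho $ prod.swap a $ prod.swap b = rho $ a $ b" for a b
      using assms unfolding perm_invariant_def by metis
    then show ?thesis
      by (simp add: qform_def)
  qed
  finally show ?thesis .
qed

lemma perm_invariant_proj: "(\<And>a. w $ prod.swap a = w $ a) \<Longrightarrow> perm_invariant (proj w)"
  by (simp add: perm_invariant_def proj_def)

lemma perm_invariant_mixture:
  "perm_invariant A \<Longrightarrow> perm_invariant B \<Longrightarrow> perm_invariant (a *\<^sub>R A + b *\<^sub>R B)"
  by (simp add: perm_invariant_def)

section \<open>Two-copy verification\<close>

lemma verification_operator_eigenvalue_nonneg:
  assumes "verification_operator Om Psi" "real_eigenvalue Om l"
  shows "0 \<le> l"
  using assms psd_real_eigenvalue_nonneg unfolding verification_operator_def by blast

lemma verification_operator_eigenbasis: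
  assumes vo: "verification_operator Om Psi" and nPsi: "norm Psi = 1"
  obtains k e lam i0 where "orthonormal_eigenbasis Om k e lam" "i0 < k" "lam i0 = 1"
    "proj Psi = proj (e i0)" "\<And>q. q < k \<Longrightarrow> q \<noteq> i0 \<Longrightarrow> lam q \<noteq> 1"
proof -
  have herm: "hermitian Om" and fixed: "Om *v Psi = of_real 1 *s Psi"
    and nondegenerate: "\<And>v. Om *v v = v \<Longrightarrow> \<exists>c. v = c *s Psi"
    using vo unfolding verification_operator_def by auto
  obtain k e lam where eb: "orthonormal_eigenbasis Om k e lam"
    using hermitian_orthonormal_eigenbasis[OF herm] by blast
  have on: "orthonormal_family k e" and eig: "\<And>i. i < k \<Longrightarrow> Om *v e i = of_real (lam i) *s e i"
    using eb unfolding orthonormal_eigenbasis_def orthonormal_eigenvectors_def by blast+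
  have multiple: "\<exists>c. e i = c *s Psi" if "i < k" "lam i = 1" for i
    using nondegenerate eig that by simp
  have "Psi \<noteq> 0"
    using nPsi by auto
  then obtain i0 where i0: "i0 < k" "cinner (e i0) Psi \<noteq> 0"
    by (rule orthonormal_eigenbasis_coefficient_nonzero[OF eb])
  have lam_i0: "lam i0 = 1"
    using hermitian_eigenvectors_orthogonal[OF herm eig[OF i0(1)] fixed] i0(2) by blast
  then obtain c where c: "e i0 = c *s Psi"
    using multiple i0(1) by blast
  have "proj Psi = proj (e i0)"
    using proj_eq_if_unit_multiple[OF c orthonormal_family_norm[OF on i0(1)] nPsi] by simp
  moreover have "lam q \<noteq> 1" if q: "q < k" "q \<noteq> i0" for q
  proof
    assume "lam q = 1"
    then obtain c' where c': "e q = c' *s Psi"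
      using multiple q(1) by blast
    have "cinner (e i0) (e q) = 0"
      using on i0(1) q unfolding orthonormal_family_def by simp
    then have "cnj c * c' = 0"
      using nPsi by (auto simp: c c' cinner_smult_left cinner_smult_right cinner_self)
    moreover have "c \<noteq> 0" "c' \<noteq> 0"
      using orthonormal_family_norm[OF on i0(1)] orthonormal_family_norm[OF on q(1)] c c' by auto
    ultimately show False
      by simp
  qed
  ultimately show ?thesis
    using that eb i0(1) lam_i0 by blast
qed

lemma two_copy_values_in_eigenbasis:
  assumes eb: "orthonormal_eigenbasis Om k e lam" and i0: "i0 < k" "proj Psi = proj (e i0)"
  shows "p_val Om rho = (\<Sum>q<k. \<Sum>l<k. lam q * Re (qform rho (tensor_vec (e q) (e l))))"
    and "f_val Om Psi rho = (\<Sum>q<k. lam q * Re (qform rho (tensor_vec (e q) (e i0))))"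
    and "Re (trace rho) = (\<Sum>q<k. \<Sum>l<k. Re (qform rho (tensor_vec (e q) (e l))))"
proof -
  note eb_1 = orthonormal_eigenbasis_mat_1[OF eb]
  show "p_val Om rho = (\<Sum>q<k. \<Sum>l<k. lam q * Re (qform rho (tensor_vec (e q) (e l))))"
    by (simp add: p_val_def trace_tensor_op_eigenbases[OF eb eb_1] Re_sum)
  show "f_val Om Psi rho = (\<Sum>q<k. lam q * Re (qform rho (tensor_vec (e q) (e i0))))"
    using i0 by (simp add: f_val_def trace_tensor_op_eigenbases[OF eb orthonormal_eigenbasis_proj[OF eb i0(1)]]
        Re_sum if_distribR if_distrib[of times] if_distrib[of "times _"] cong: if_cong)
  have "trace rho = trace (tensor_op (mat 1) (mat 1) ** rho)"
    by (simp add: tensor_op_mat_1)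
  then show "Re (trace rho) = (\<Sum>q<k. \<Sum>l<k. Re (qform rho (tensor_vec (e q) (e l))))"
    by (simp add: trace_tensor_op_eigenbases[OF eb_1 eb_1] Re_sum)
qed

lemma f_val_nonneg:
  assumes vo: "verification_operator Om Psi" and nPsi: "norm Psi = 1" and rho: "psd rho"
  shows "0 \<le> f_val Om Psi rho"
proof -
  obtain k e lam i0 where eb: "orthonormal_eigenbasis Om k e lam" and i0: "i0 < k" "proj Psi = proj (e i0)"
    using verification_operator_eigenbasis[OF vo nPsi] by metis
  have "0 \<le> lam q" if "q < k" for q
    using verification_operator_eigenvalue_nonneg[OF vo] orthonormal_eigenbasis_real_eigenvalue[OF eb that] .
  moreover have "0 \<le> Re (qform rho w)" for w
    using rho unfolding psd_def by blast
  ultimately show ?thesis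
    unfolding two_copy_values_in_eigenbasis(2)[OF eb i0] by (intro sum_nonneg mult_nonneg_nonneg) auto
qed

lemma sum_symmetric_weights_nonneg:
  fixes r g :: "'a \<Rightarrow> 'a \<Rightarrow> real"
  assumes r_nonneg: "\<And>q l. q \<in> I \<Longrightarrow> l \<in> I \<Longrightarrow> 0 \<le> r q l"
    and r_sym: "\<And>q l. q \<in> I \<Longrightarrow> l \<in> I \<Longrightarrow> r q l = r l q"
    and g_sym_nonneg: "\<And>q l. q \<in> I \<Longrightarrow> l \<in> I \<Longrightarrow> 0 \<le> g q l + g l q"
  shows "0 \<le> (\<Sum>q\<in>I. \<Sum>l\<in>I. r q l * g q l)"
proof -
  have "(\<Sum>q\<in>I. \<Sum>l\<in>I. r q l * g q l) = (\<Sum>q\<in>I. \<Sum>l\<in>I. r q l * g l q)"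
    by (subst sum.swap) (auto intro!: sum.cong simp: r_sym)
  then have "2 * (\<Sum>q\<in>I. \<Sum>l\<in>I. r q l * g q l) = (\<Sum>q\<in>I. \<Sum>l\<in>I. r q l * (g q l + g l q))"
    by (simp add: algebra_simps sum.distrib)
  also have "\<dots> \<ge> 0"
    by (intro sum_nonneg mult_nonneg_nonneg r_nonneg g_sym_nonneg)
  finally show ?thesis
    by simp
qed

lemma two_copy_coefficient_symmetrised_nonneg:
  fixes lam :: "nat \<Rightarrow> real"
  assumes lam_i0: "lam i0 = 1"
    and lam_q: "q \<noteq> i0 \<Longrightarrow> tau \<le> lam q \<and> lam q \<le> beta"
    and lam_l: "l \<noteq> i0 \<Longrightarrow> tau \<le> lam l \<and> lam l \<le> beta"
    and params: "0 \<le> tau" "0 \<le> beta" "beta \<le> 1/2"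
  defines "g \<equiv> \<lambda>q l. (if l = i0 then (1 + tau - 2 * beta) * lam q else 0) - tau * lam q + tau * beta"
  shows "0 \<le> g q l + g l q"
proof -
  consider "q = i0" "l = i0" | "q = i0" "l \<noteq> i0" | "q \<noteq> i0" "l = i0" | "q \<noteq> i0" "l \<noteq> i0"
    by blast
  then show ?thesis
  proof cases
    case 1
    then show ?thesis
      using lam_i0 params by (simp add: g_def) (use mult_nonneg_nonneg[OF params(2,1)] in linarith)
  next
    case 2
    then have "0 \<le> (lam l - tau) * (1 - 2 * beta)"
      using lam_l params by simp
    with 2 show ?thesis
      using lam_i0 by (simp add: g_def algebra_simps)
  next
    case 3
    then have "0 \<le> (lam q - tau) * (1 - 2 * beta)"
      using lam_q params by simp
    with 3 show ?thesis
      using lam_i0 by (simp add: g_def algebra_simps)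
  next
    case 4
    then have "0 \<le> tau * (2 * beta - lam q - lam l)"
      using lam_q lam_l params by (intro mult_nonneg_nonneg) auto
    with 4 show ?thesis
      by (simp add: g_def algebra_simps)
  qed
qed

lemma two_copy_weights_bound:
  fixes r :: "nat \<Rightarrow> nat \<Rightarrow> real" and lam :: "nat \<Rightarrow> real"
  assumes I: "finite I" "i0 \<in> I"
    and r_nonneg: "\<And>q l. q \<in> I \<Longrightarrow> l \<in> I \<Longrightarrow> 0 \<le> r q l"
    and r_sym: "\<And>q l. q \<in> I \<Longrightarrow> l \<in> I \<Longrightarrow> r q l = r l q"
    and lam_i0: "lam i0 = 1" and lam_bounds: "\<And>q. q \<in> I \<Longrightarrow> q \<noteq> i0 \<Longrightarrow> tau \<le> lam q \<and> lam q \<le> beta"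
    and params: "0 \<le> tau" "0 \<le> beta" "beta \<le> 1/2"
  shows "tau * ((\<Sum>q\<in>I. \<Sum>l\<in>I. lam q * r q l) - beta * (\<Sum>q\<in>I. \<Sum>l\<in>I. r q l))
    \<le> (1 + tau - 2 * beta) * (\<Sum>q\<in>I. lam q * r q i0)"
proof -
  define g where "g q l = (if l = i0 then (1 + tau - 2 * beta) * lam q else 0) - tau * lam q + tau * beta"
    for q l
  have "0 \<le> (\<Sum>q\<in>I. \<Sum>l\<in>I. r q l * g q l)"
    unfolding g_def using lam_i0 lam_bounds params
    by (intro sum_symmetric_weights_nonneg r_nonneg r_sym two_copy_coefficient_symmetrised_nonneg) auto
  also have "(\<Sum>q\<in>I. \<Sum>l\<in>I. r q l * g q l) = (1 + tau - 2 * beta) * (\<Sum>q\<in>I. lam q * r q i0)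
      - tau * ((\<Sum>q\<in>I. \<Sum>l\<in>I. lam q * r q l) - beta * (\<Sum>q\<in>I. \<Sum>l\<in>I. r q l))"
    using I by (simp add: g_def algebra_simps sum.distrib sum_subtractf sum_distrib_left
        if_distrib[of "times _"] cong: if_cong)
  finally show ?thesis
    by simp
qed

lemma verification_fidelity_lower_bound:
  assumes vo: "verification_operator Om Psi" and nPsi: "norm Psi = 1"
    and spectrum: "\<forall>l. real_eigenvalue Om l \<and> l \<noteq> 1 \<longrightarrow> tau \<le> l \<and> l \<le> beta"
    and params: "0 \<le> tau" "0 \<le> beta" "beta \<le> 1/2"
    and rho: "density rho" "perm_invariant rho"
  shows "tau * (p_val Om rho - beta) \<le> (1 + tau - 2 * beta) * f_val Om Psi rho"
proof -
  obtain k e lam i0 where eb: "orthonormal_eigenbasis Om k e lam"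
    and i0: "i0 < k" "lam i0 = 1" "proj Psi = proj (e i0)"
    and other: "\<And>q. q < k \<Longrightarrow> q \<noteq> i0 \<Longrightarrow> lam q \<noteq> 1"
    using verification_operator_eigenbasis[OF vo nPsi] by metis
  define r where "r q l = Re (qform rho (tensor_vec (e q) (e l)))" for q l
  note expansion = two_copy_values_in_eigenbasis[OF eb i0(1) i0(3), of rho, folded r_def]
  have "tau * ((\<Sum>q<k. \<Sum>l<k. lam q * r q l) - beta * (\<Sum>q<k. \<Sum>l<k. r q l))
      \<le> (1 + tau - 2 * beta) * (\<Sum>q<k. lam q * r q i0)"
  proof (rule two_copy_weights_bound)
    show "0 \<le> r q l" for q l
      using rho(1) unfolding density_def psd_def r_def by blast
    show "r q l = r l q" for q l
      using qform_tensor_vec_swap[OF rho(2)] by (simp add: r_def)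
    show "tau \<le> lam q \<and> lam q \<le> beta" if "q \<in> {..<k}" "q \<noteq> i0" for q
      using spectrum orthonormal_eigenbasis_real_eigenvalue[OF eb] other that by simp
  qed (use i0 params in auto)
  moreover have "(\<Sum>q<k. \<Sum>l<k. r q l) = 1"
    using rho(1) expansion(3) by (simp add: density_def)
  ultimately show ?thesis
    by (simp add: expansion(1,2))
qed

text \<open>For these states the estimate \<open>verification_fidelity_lower_bound\<close> is an equality.\<close>
lemma two_copy_witness:
  assumes vo: "verification_operator Om Psi" and nPsi: "norm Psi = 1"
    and v: "norm v = 1" "Om *v v = of_real beta *s v" "beta \<noteq> 1"
    and u: "norm u = 1" "Om *v u = of_real tau *s u" "tau \<noteq> 1"
    and t: "0 \<le> t" "t \<le> 1"
  defines "rho \<equiv> (1 - t) *\<^sub>R proj (tensor_vec v v) + (t / 2) *\<^sub>R proj (tensor_vec Psi u + tensor_vec u Psi)"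
  shows "density rho" "perm_invariant rho"
    "p_val Om rho = (1 - t) * beta + t * (1 + tau) / 2" "f_val Om Psi rho = t * tau / 2"
proof -
  have herm: "hermitian Om" and fixed: "Om *v Psi = Psi"
    using vo unfolding verification_operator_def by auto
  have fixed': "Om *v Psi = of_real 1 *s Psi"
    by (simp add: fixed)
  have orth: "cinner Psi v = 0" "cinner Psi u = 0"
    using hermitian_eigenvectors_orthogonal[OF herm fixed'] v u by auto
  then have orth': "cinner v Psi = 0" "cinner u Psi = 0"
    using cinner_commute[of Psi v] cinner_commute[of Psi u] by auto
  have unit: "cinner Psi Psi = 1" "cinner v v = 1" "cinner u u = 1"
    using nPsi v(1) u(1) by (simp_all add: cinner_self)
  note simps = orth orth' unit qform_eq_cinner matrix_vector_right_distrib tensor_op_mult_tensor_vec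
    cinner_add_left cinner_add_right cinner_tensor_vec fixed v(2) u(2) cinner_smult_right
    proj_mult_vec matrix_vector_mul_lid
  have "psd rho"
    unfolding rho_def using t by (intro psd_add psd_scaleR psd_proj) auto
  moreover have "trace rho = 1"
  proof -
    have "trace rho = trace (mat 1 ** rho)"
      by simp
    also have "\<dots> = 1"
      unfolding rho_def trace_mult_mixture by (simp add: simps)
    finally show ?thesis .
  qed
  ultimately show "density rho"
    by (simp add: density_def)
  show "perm_invariant rho"
    unfolding rho_def by (intro perm_invariant_mixture perm_invariant_proj) (auto simp: tensor_vec_def mult.commute)
  show "p_val Om rho = (1 - t) * beta + t * (1 + tau) / 2"
    unfolding p_val_def rho_def trace_mult_mixture by (simp add: simps)
  show "f_val Om Psi rho = t * tau / 2"
    unfolding f_val_def rho_def trace_mult_mixture by (simp add: simps)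
qed

section \<open>Evaluation of \<open>F(1, \<delta>, \<Omega>)\<close>\<close>

lemma F1_le_admissible:
  assumes "0 < delta" "verification_operator Om Psi" "norm Psi = 1"
    and "density rho" "perm_invariant rho" "delta \<le> p_val Om rho"
  shows "F1 delta Om Psi \<le> f_val Om Psi rho / p_val Om rho"
proof -
  have "bdd_below {f_val Om Psi rho / p_val Om rho | rho.
      density rho \<and> perm_invariant rho \<and> delta \<le> p_val Om rho}"
    using f_val_nonneg[OF assms(2,3)] assms(1) by (intro bdd_belowI[of _ 0]) (auto simp: density_def)
  then show ?thesis
    unfolding F1_def using assms(4-6) by (intro cInf_lower) auto
qed

lemma F1_greatest:
  assumes "density rho0" "perm_invariant rho0" "delta \<le> p_val Om rho0"
    and "\<And>rho. density rho \<Longrightarrow> perm_invariant rho \<Longrightarrow> delta \<le> p_val Om rho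
      \<Longrightarrow> c \<le> f_val Om Psi rho / p_val Om rho"
  shows "c \<le> F1 delta Om Psi"
  unfolding F1_def using assms by (intro cInf_greatest) auto

lemma F1_eq_0_if_le_beta:
  assumes vo: "verification_operator Om Psi" and nPsi: "norm Psi = 1"
    and beta: "real_eigenvalue Om beta" "beta \<noteq> 1" and delta: "0 < delta" "delta \<le> beta"
  shows "F1 delta Om Psi = 0"
proof -
  obtain v where v: "norm v = 1" "Om *v v = of_real beta *s v"
    using real_eigenvalue_unit_eigenvector[OF beta(1)] by blast
  note witness = two_copy_witness[OF vo nPsi v beta(2) v beta(2), of 0, simplified]
  have "F1 delta Om Psi \<le> 0"
    using F1_le_admissible[OF delta(1) vo nPsi witness(1,2)] witness(3,4) delta by simp
  moreover have "0 \<le> F1 delta Om Psi"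
    using witness delta f_val_nonneg[OF vo nPsi]
    by (intro F1_greatest[of _ _ Om]) (auto simp: density_def)
  ultimately show ?thesis
    by simp
qed

lemma ratio_ge_if_affine_bound:
  fixes tau beta delta d p f :: real
  assumes "0 \<le> tau" "0 \<le> beta" "0 < delta" "delta \<le> p" "0 < d" "tau * (p - beta) \<le> d * f"
  shows "tau * (delta - beta) / d / delta \<le> f / p"
proof -
  have "(delta - beta) * p \<le> (p - beta) * delta"
    using mult_left_mono[OF assms(4,2)] by (simp add: algebra_simps)
  then have "tau * (delta - beta) * p \<le> tau * (p - beta) * delta"
    using mult_left_mono[OF _ assms(1)] by (simp add: mult.assoc)
  also have "\<dots> \<le> d * f * delta"
    using assms(3,6) by (simp add: mult_right_mono)
  finally show ?thesis
    using assms(3-5) by (simp add: field_simps)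
qed

lemma F1_eq_if_beta_less:
  assumes vo: "verification_operator Om Psi" and nPsi: "norm Psi = 1"
    and spectrum: "\<forall>l. real_eigenvalue Om l \<and> l \<noteq> 1 \<longrightarrow> tau \<le> l \<and> l \<le> beta"
    and beta: "real_eigenvalue Om beta" and tau: "real_eigenvalue Om tau"
    and delta: "beta < delta" "delta \<le> 1/2"
  shows "F1 delta Om Psi = tau * (delta - beta) / (1 + tau - 2 * beta) / delta"
proof -
  have params: "0 \<le> tau" "tau \<le> beta" "beta < 1/2" "0 < delta"
    using verification_operator_eigenvalue_nonneg[OF vo tau] spectrum beta delta by auto
  define d where "d = 1 + tau - 2 * beta"
  have d: "0 < d"
    using params by (simp add: d_def)
  obtain v where v: "norm v = 1" "Om *v v = of_real beta *s v"
    using real_eigenvalue_unit_eigenvector[OF beta] by blast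
  obtain u where u: "norm u = 1" "Om *v u = of_real tau *s u"
    using real_eigenvalue_unit_eigenvector[OF tau] by blast
  define t where "t = 2 * (delta - beta) / d"
  have t: "0 \<le> t" "t \<le> 1"
    using d delta params by (auto simp: t_def d_def)
  have "beta \<noteq> 1" "tau \<noteq> 1"
    using params by auto
  note witness = two_copy_witness[OF vo nPsi v this(1) u this(2) t]
  have "(1 - t) * beta + t * (1 + tau) / 2 = beta + t * d / 2"
    by (simp add: d_def field_simps)
  then have p_witness: "(1 - t) * beta + t * (1 + tau) / 2 = delta"
    using d by (simp add: t_def field_simps)
  have f_witness: "t * tau / 2 = tau * (delta - beta) / d"
    using d by (simp add: t_def field_simps)
  show ?thesis
  proof (rule antisym)
    show "F1 delta Om Psi \<le> tau * (delta - beta) / (1 + tau - 2 * beta) / delta"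
      using F1_le_admissible[OF params(4) vo nPsi witness(1,2)] witness(3,4) params
      by (simp add: p_witness f_witness d_def)
    show "tau * (delta - beta) / (1 + tau - 2 * beta) / delta \<le> F1 delta Om Psi"
    proof (rule F1_greatest[OF witness(1,2)])
      fix rho assume rho: "density rho" "perm_invariant rho" "delta \<le> p_val Om rho"
      show "tau * (delta - beta) / (1 + tau - 2 * beta) / delta \<le> f_val Om Psi rho / p_val Om rho"
        using verification_fidelity_lower_bound[OF vo nPsi spectrum params(1) _ _ rho(1,2)] params rho(3) d
        unfolding d_def[symmetric] by (intro ratio_ge_if_affine_bound) auto
    qed (use witness(3) p_witness in simp)
  qed
qed

theorem corollary7:
  fixes Om :: "complex^'n^'n" and Psi :: "complex^'n"
    and beta tau eps delta :: real
  assumes "CARD('n) \<ge> 2"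
    and "norm Psi = 1"
    and "verification_operator Om Psi"
    and "real_eigenvalue Om beta" and "beta < 1"
    and "\<forall>l. real_eigenvalue Om l \<and> l \<noteq> 1 \<longrightarrow> l \<le> beta"
    and "real_eigenvalue Om tau"
    and "\<forall>l. real_eigenvalue Om l \<longrightarrow> tau \<le> l"
    and "0 < eps" and "eps < 1" and "0 < delta" and "delta \<le> 1/2"
  shows "F1 delta Om Psi \<ge> 1 - eps \<longleftrightarrow>
    (0 < beta \<and> beta < delta \<and> tau * (delta - beta) / (1 + tau - 2 * beta) \<ge> delta * (1 - eps))"
proof (cases "beta < delta")
  case True
  have spectrum: "\<forall>l. real_eigenvalue Om l \<and> l \<noteq> 1 \<longrightarrow> tau \<le> l \<and> l \<le> beta"
    using assms(6,8) by blast
  define X where "X = tau * (delta - beta) / (1 + tau - 2 * beta)"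
  have "F1 delta Om Psi = X / delta"
    unfolding X_def using F1_eq_if_beta_less[OF assms(3,2) spectrum assms(4,7) True assms(12)] .
  then have iff: "F1 delta Om Psi \<ge> 1 - eps \<longleftrightarrow> X \<ge> delta * (1 - eps)"
    using assms(11) by (simp add: pos_le_divide_eq mult.commute)
  have "0 < beta" if "X \<ge> delta * (1 - eps)"
  proof -
    have "0 < delta * (1 - eps)"
      using assms(10,11) by simp
    with that have "tau \<noteq> 0"
      by (auto simp: X_def)
    then show ?thesis
      using verification_operator_eigenvalue_nonneg[OF assms(3,7)] assms(4,8) by force
  qed
  with iff True show ?thesis
    unfolding X_def[symmetric] by blast
next
  case False
  then have "F1 delta Om Psi = 0"
    using F1_eq_0_if_le_beta[OF assms(3,2,4)] assms(5,11) by simp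
  then show ?thesis
    using False assms(9,10) by simp
qed

end
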